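(* Let $0<q<1$, $p,l\in\mathbb{Z}_+$ and $x\in\mathbb{C}$. Then $$p_l(x;1,1;q)\,(q^{1-p}x;q)_p=\sum_{m=0}^l\frac{q^{m(m-l+p)}(q;q)_{l+m}}{(q;q)_{l-m}(q;q)_m^2}\,p_{l-m}(q^p;q^m,q^m;q)\,(q^{1-p-m}x;q)_{p+m}.$$
   Context: $(a;q)_n=\prod_{j=0}^{n-1}(1-aq^j)$. Little $q$-Jacobi polynomial: $p_n(x;a,b;q)=\sum_{k=0}^n\frac{(q^{-n};q)_k(q^{n+1}ab;q)_k}{(qa;q)_k(q;q)_k}(qx)^k$. *)

theory Defs
  imports Complex_Main
begin

definition qpoch :: "'a::field \<Rightarrow> 'a \<Rightarrow> nat \<Rightarrow> 'a" where
  "qpoch a q n = (\<Prod>j<n. (1 - a * q ^ j))"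

definition little_qjacobi :: "nat \<Rightarrow> 'a::field \<Rightarrow> 'a \<Rightarrow> 'a \<Rightarrow> 'a \<Rightarrow> 'a" where
  "little_qjacobi n x a b q =
     (\<Sum>k=0..n. qpoch (inverse (q ^ n)) q k * qpoch (q ^ (n+1) * a * b) q k
                / (qpoch (q * a) q k * qpoch q q k) * (q * x) ^ k)"

end

theory Submission
  imports Defs
begin

text \<open>
  Write \<open>p\<^sub>l(x;1,1;q) = \<Sum>\<^sub>k c\<^sub>k x\<^sup>k\<close> and expand every power of \<open>x\<close> in the Newton basis
  \<open>(x - a)(x - aq)\<cdots>(x - aq\<^sup>m\<^sup>-\<^sup>1)\<close>, \<open>a = q\<^sup>p\<close>, by the q-binomial theorem
  \<open>x\<^sup>k = \<Sum>\<^sub>m [k,m]\<^sub>q a\<^sup>k\<^sup>-\<^sup>m (x - a)\<cdots>(x - aq\<^sup>m\<^sup>-\<^sup>1)\<close>. After exchanging the two sums,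
  the coefficient of the \<open>m\<close>-th Newton product is \<open>c\<^sub>m p\<^sub>l\<^sub>-\<^sub>m(q\<^sup>p;q\<^sup>m,q\<^sup>m;q)\<close>, because
  \<open>c\<^sub>m\<^sub>+\<^sub>j [m+j,m]\<^sub>q\<close> factors as \<open>c\<^sub>m\<close> times the \<open>j\<close>-th coefficient of that polynomial.
  Reading the Newton product backwards turns it into a multiple of \<open>(q\<^sup>1\<^sup>-\<^sup>p\<^sup>-\<^sup>m x;q)\<^sub>m\<close>,
  and multiplying by \<open>(q\<^sup>1\<^sup>-\<^sup>p x;q)\<^sub>p\<close> completes it to \<open>(q\<^sup>1\<^sup>-\<^sup>p\<^sup>-\<^sup>m x;q)\<^sub>p\<^sub>+\<^sub>m\<close>.
\<close>

lemma qpoch_0 [simp]: "qpoch a q 0 = 1"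
  by (simp add: qpoch_def)

lemma qpoch_Suc: "qpoch a q (Suc n) = qpoch a q n * (1 - a * q ^ n)"
  by (simp add: qpoch_def)

lemma qpoch_add: "qpoch a q (m + n) = qpoch a q m * qpoch (a * q ^ m) q n"
  by (induction n) (simp_all add: qpoch_Suc power_add mult_ac)

lemma qpoch_self_nonzero:
  fixes Q :: "'a::real_normed_field"
  assumes "norm Q < 1"
  shows "qpoch Q Q n \<noteq> 0"
proof -
  have "Q * Q ^ j \<noteq> 1" for j
  proof
    assume "Q * Q ^ j = 1"
    then have "norm Q ^ Suc j = 1"
      by (metis norm_one norm_power power_Suc)
    moreover have "norm Q ^ Suc j < 1"
      using assms by (simp add: power_less_one_iff del: power_Suc)
    ultimately show False by simp
  qed
  then show ?thesis
    by (simp add: qpoch_def)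
qed

lemma qpoch_power_Suc_nonzero:
  assumes "\<And>n. qpoch Q Q n \<noteq> 0"
  shows "qpoch (Q ^ Suc k) Q n \<noteq> 0"
  using assms [of "k + n"] by (simp add: qpoch_add)

lemma sum_lessThan_id_eq_choose_two: "(\<Sum>i<m. i) = m choose 2"
  by (induction m) (simp_all add: numeral_2_eq_2)

lemma two_mult_choose_two: "2 * (m choose 2) = m * (m - 1)"
  by (induction m) (auto simp: numeral_2_eq_2 algebra_simps)

lemma prod_diff_geometric_eq_qpoch_reversed:
  fixes x b c Q :: "'a::field"
  assumes "Q \<noteq> 0" and "b * c * Q ^ m = Q"
  shows "(\<Prod>i<m. x - c * Q ^ i) = (- c) ^ m * Q ^ (m choose 2) * qpoch (b * x) Q m"
proof (cases m)
  case 0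
  then show ?thesis by (simp add: numeral_2_eq_2)
next
  case (Suc n)
  have bc: "b * c * Q ^ n = 1"
    using assms Suc by (simp add: mult_ac)
  have factor: "x - c * Q ^ i = - c * Q ^ i * (1 - b * x * Q ^ (m - Suc i))" if "i < m" for i
  proof -
    have "Q ^ i * Q ^ (m - Suc i) = Q ^ n"
      using that Suc by (simp flip: power_add)
    then show ?thesis
      using bc by (simp add: algebra_simps)
  qed
  have "(\<Prod>i<m. x - c * Q ^ i) = (\<Prod>i<m. - c * Q ^ i * (1 - b * x * Q ^ (m - Suc i)))"
    using factor by (intro prod.cong) simp_all
  also have "\<dots> = (\<Prod>i<m. - c * Q ^ i) * (\<Prod>i<m. 1 - b * x * Q ^ (m - Suc i))"
    by (rule prod.distrib)
  also have "(\<Prod>i<m. - c * Q ^ i) = (- c) ^ m * Q ^ (m choose 2)"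
    by (subst prod.distrib) (simp add: power_sum flip: sum_lessThan_id_eq_choose_two)
  also have "(\<Prod>i<m. 1 - b * x * Q ^ (m - Suc i)) = qpoch (b * x) Q m"
    unfolding qpoch_def by (rule prod.nat_diff_reindex)
  finally show ?thesis .
qed

lemma qpoch_reversed:
  fixes a b Q :: "'a::field"
  assumes "Q \<noteq> 0" and "a * b * Q ^ m = Q"
  shows "qpoch a Q m = (- a) ^ m * Q ^ (m choose 2) * qpoch b Q m"
  using prod_diff_geometric_eq_qpoch_reversed [of Q b a m 1] assms
  by (simp add: qpoch_def mult_ac)

(* Gaussian binomial coefficient, defined by the q-Pascal rule rather than as a quotient of
   q-Pochhammer symbols, so that the q-binomial expansion below needs no nonvanishing hypothesis. *)
fun qbinom :: "'a::comm_semiring_1 \<Rightarrow> nat \<Rightarrow> nat \<Rightarrow> 'a" where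
  "qbinom Q n 0 = 1"
| "qbinom Q 0 (Suc m) = 0"
| "qbinom Q (Suc n) (Suc m) = qbinom Q n m + Q ^ Suc m * qbinom Q n (Suc m)"

lemma qbinom_eq_0: "n < m \<Longrightarrow> qbinom Q n m = 0"
  by (induction Q n m rule: qbinom.induct) auto

lemma qbinom_mult_qpoch:
  fixes Q :: "'a::field"
  shows "qbinom Q (m + j) m * qpoch Q Q m * qpoch Q Q j = qpoch Q Q (m + j)"
proof (induction m arbitrary: j)
  case 0
  then show ?case by simp
next
  case (Suc m)
  note IH_m = Suc.IH
  show ?case
  proof (induction j)
    case 0
    have "qbinom Q (Suc m + 0) (Suc m) * qpoch Q Q (Suc m) * qpoch Q Q 0
        = qbinom Q (m + 0) m * qpoch Q Q m * qpoch Q Q 0 * (1 - Q * Q ^ m)"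
      by (simp add: qpoch_Suc qbinom_eq_0)
    then show ?case
      unfolding IH_m by (simp add: qpoch_Suc)
  next
    case (Suc j)
    define P where "P = qpoch Q Q (Suc m + j)"
    have outer: "qbinom Q (m + Suc j) m * qpoch Q Q m * qpoch Q Q (Suc j) = P"
      using IH_m [of "Suc j"] by (simp add: P_def)
    have inner: "qbinom Q (Suc m + j) (Suc m) * qpoch Q Q (Suc m) * qpoch Q Q j = P"
      using Suc.IH by (simp add: P_def)
    have "qbinom Q (Suc m + Suc j) (Suc m) * qpoch Q Q (Suc m) * qpoch Q Q (Suc j)
        = qbinom Q (m + Suc j) m * qpoch Q Q m * qpoch Q Q (Suc j) * (1 - Q * Q ^ m)
          + Q ^ Suc m * (1 - Q * Q ^ j)
            * (qbinom Q (Suc m + j) (Suc m) * qpoch Q Q (Suc m) * qpoch Q Q j)"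
      by (simp add: qpoch_Suc algebra_simps)
    also have "\<dots> = P * (1 - Q * Q ^ (Suc m + j))"
      unfolding outer inner by (simp add: algebra_simps power_add)
    finally show ?case
      by (simp add: P_def qpoch_Suc)
  qed
qed

lemma power_eq_sum_qbinom_newton:
  fixes x a Q :: "'a::comm_ring_1"
  shows "x ^ k = (\<Sum>m\<le>k. qbinom Q k m * a ^ (k - m) * (\<Prod>i<m. x - a * Q ^ i))"
proof (induction k)
  case 0
  then show ?case by simp
next
  case (Suc k)
  define P where "P m = (\<Prod>i<m. x - a * Q ^ i)" for m
  have P_Suc: "x * P m = P (Suc m) + a * Q ^ m * P m" for m
    by (simp add: P_def algebra_simps)
  have "x ^ Suc k = (\<Sum>m\<le>k. qbinom Q k m * a ^ (k - m) * (x * P m))"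
    using Suc by (simp add: P_def sum_distrib_left mult_ac)
  also have "\<dots> = (\<Sum>m\<le>k. qbinom Q k m * a ^ (k - m) * P (Suc m))
       + (\<Sum>m\<le>k. Q ^ m * qbinom Q k m * a ^ (Suc k - m) * P m)"
    by (simp add: P_Suc algebra_simps sum.distrib Suc_diff_le)
  also have "(\<Sum>m\<le>k. Q ^ m * qbinom Q k m * a ^ (Suc k - m) * P m)
      = (\<Sum>m\<le>Suc k. Q ^ m * qbinom Q k m * a ^ (Suc k - m) * P m)"
    by (simp add: qbinom_eq_0)
  also have "\<dots> = a ^ Suc k + (\<Sum>m\<le>k. Q ^ Suc m * qbinom Q k (Suc m) * a ^ (k - m) * P (Suc m))"
    by (subst sum.atMost_Suc_shift) (simp add: P_def)
  finally have "x ^ Suc k = a ^ Suc k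
      + (\<Sum>m\<le>k. (qbinom Q k m + Q ^ Suc m * qbinom Q k (Suc m)) * a ^ (k - m) * P (Suc m))"
    by (simp add: algebra_simps sum.distrib)
  also have "\<dots> = (\<Sum>m\<le>Suc k. qbinom Q (Suc k) m * a ^ (Suc k - m) * P m)"
    by (subst sum.atMost_Suc_shift) (simp add: P_def)
  finally show ?case by (simp add: P_def)
qed

lemma sum_monomials_eq_sum_newton:
  fixes c :: "nat \<Rightarrow> 'a::comm_ring_1"
  shows "(\<Sum>k\<le>l. c k * x ^ k)
       = (\<Sum>m\<le>l. (\<Sum>j\<le>l - m. c (m + j) * qbinom Q (m + j) m * a ^ j) * (\<Prod>i<m. x - a * Q ^ i))"
proof -
  define h where "h k m = c k * qbinom Q k m * a ^ (k - m) * (\<Prod>i<m. x - a * Q ^ i)" for k m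
  have "(\<Sum>k\<le>l. c k * x ^ k) = (\<Sum>k\<le>l. \<Sum>m\<le>k. h k m)"
    by (simp add: h_def power_eq_sum_qbinom_newton [of x _ Q a] sum_distrib_left mult_ac)
  also have "\<dots> = (\<Sum>(m, j)\<in>{(m, j). m + j \<le> l}. h (m + j) m)"
    by (subst sum.triangle_reindex_eq) (auto intro!: sum.cong)
  also have "\<dots> = (\<Sum>m\<le>l. \<Sum>j\<le>l - m. h (m + j) m)"
    by (simp add: pairs_le_eq_Sigma sum.Sigma)
  finally show ?thesis
    by (simp add: h_def sum_distrib_left sum_distrib_right mult_ac)
qed

definition little_qjacobi_coeff :: "nat \<Rightarrow> 'a::field \<Rightarrow> 'a \<Rightarrow> 'a \<Rightarrow> nat \<Rightarrow> 'a" where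
  "little_qjacobi_coeff n a b q k =
     qpoch (inverse (q ^ n)) q k * qpoch (q ^ (n + 1) * a * b) q k
       / (qpoch (q * a) q k * qpoch q q k) * q ^ k"

lemma little_qjacobi_eq_sum_coeff:
  "little_qjacobi n x a b q = (\<Sum>k\<le>n. little_qjacobi_coeff n a b q k * x ^ k)"
  unfolding little_qjacobi_def little_qjacobi_coeff_def atLeast0AtMost
  by (simp add: power_mult_distrib mult_ac)

lemma little_qjacobi_coeff_mult_qbinom:
  fixes Q :: "'a::field"
  assumes "Q \<noteq> 0" and nonzero: "\<And>n. qpoch Q Q n \<noteq> 0" and "m \<le> l"
  shows "little_qjacobi_coeff l 1 1 Q (m + j) * qbinom Q (m + j) m
       = little_qjacobi_coeff l 1 1 Q m * little_qjacobi_coeff (l - m) (Q ^ m) (Q ^ m) Q j"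
proof -
  have qbinom: "qbinom Q (m + j) m = qpoch Q Q (m + j) / (qpoch Q Q m * qpoch Q Q j)"
    using qbinom_mult_qpoch [of Q m j] nonzero by (simp add: field_simps)
  have "inverse (Q ^ l) * Q ^ m = inverse (Q ^ (l - m))"
    using assms by (simp add: field_simps flip: power_add)
  then have split_inverse: "qpoch (inverse (Q ^ l)) Q (m + j)
      = qpoch (inverse (Q ^ l)) Q m * qpoch (inverse (Q ^ (l - m))) Q j"
    by (simp add: qpoch_add)
  have "Q ^ (l + 1) * Q ^ m = Q ^ (l - m + 1) * Q ^ m * Q ^ m"
    using assms by (simp flip: power_add)
  then have split_upper: "qpoch (Q ^ (l + 1)) Q (m + j)
      = qpoch (Q ^ (l + 1)) Q m * qpoch (Q ^ (l - m + 1) * Q ^ m * Q ^ m) Q j"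
    by (simp only: qpoch_add)
  have split_lower: "qpoch Q Q (m + j) = qpoch Q Q m * qpoch (Q * Q ^ m) Q j"
    by (rule qpoch_add)
  have "qpoch (Q * Q ^ m) Q j \<noteq> 0"
    using qpoch_power_Suc_nonzero [OF nonzero] by simp
  then show ?thesis
    unfolding little_qjacobi_coeff_def qbinom split_inverse split_upper split_lower mult_1_right
    using nonzero \<open>Q \<noteq> 0\<close> by (simp add: field_simps power2_eq_square power_add)
qed

lemma qpoch_inverse_power:
  fixes Q :: "'a::field"
  assumes "Q \<noteq> 0" and "qpoch Q Q (l - m) \<noteq> 0" and "m \<le> l"
  shows "qpoch (inverse (Q ^ l)) Q m
       = (- inverse (Q ^ l)) ^ m * Q ^ (m choose 2) * (qpoch Q Q l / qpoch Q Q (l - m))"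
proof -
  have "inverse (Q ^ l) * Q ^ (l - m + 1) * Q ^ m = Q"
    using assms by (simp add: field_simps flip: power_add)
  then have "qpoch (inverse (Q ^ l)) Q m
      = (- inverse (Q ^ l)) ^ m * Q ^ (m choose 2) * qpoch (Q ^ (l - m + 1)) Q m"
    by (rule qpoch_reversed [OF \<open>Q \<noteq> 0\<close>])
  moreover have "qpoch Q Q l = qpoch Q Q (l - m) * qpoch (Q ^ (l - m + 1)) Q m"
    using qpoch_add [of Q Q "l - m" m] assms by simp
  ultimately show ?thesis
    using assms by simp
qed

lemma little_qjacobi_coeff_mult_newton_prod:
  fixes Q x :: "'a::field"
  assumes "Q \<noteq> 0" and nonzero: "\<And>n. qpoch Q Q n \<noteq> 0" and "m \<le> l"
  shows "little_qjacobi_coeff l 1 1 Q m * (\<Prod>i<m. x - Q ^ p * Q ^ i)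
       = Q powi (int m * (int m - int l + int p)) * qpoch Q Q (l + m)
           / (qpoch Q Q (l - m) * (qpoch Q Q m) ^ 2)
         * qpoch (Q powi (1 - int p - int m) * x) Q m"
proof -
  have upper: "qpoch (Q ^ (l + 1)) Q m = qpoch Q Q (l + m) / qpoch Q Q l"
    using qpoch_add [of Q Q l m] nonzero by (simp add: field_simps)
  have prod: "(\<Prod>i<m. x - Q ^ p * Q ^ i)
      = (- (Q ^ p)) ^ m * Q ^ (m choose 2) * qpoch (Q powi (1 - int p - int m) * x) Q m"
  proof (rule prod_diff_geometric_eq_qpoch_reversed [OF \<open>Q \<noteq> 0\<close>])
    show "Q powi (1 - int p - int m) * Q ^ p * Q ^ m = Q"
      using \<open>Q \<noteq> 0\<close> by (simp add: power_int_diff power_int_add field_simps)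
  qed
  have scalar: "Q ^ m * (- inverse (Q ^ l)) ^ m * (- (Q ^ p)) ^ m * (Q ^ (m choose 2)) ^ 2
      = Q powi (int m * (int m - int l + int p))"
  proof -
    have exponent: "int m * (int m - int l + int p)
        = int m + (int p - int l) * int m + int (2 * (m choose 2))"
      by (cases m) (simp_all add: two_mult_choose_two algebra_simps)
    have "(- inverse (Q ^ l)) ^ m * (- (Q ^ p)) ^ m = (Q powi (int p - int l)) ^ m"
      using \<open>Q \<noteq> 0\<close>
      by (simp add: power_int_diff divide_inverse mult.commute flip: power_mult_distrib)
    moreover have "(Q ^ (m choose 2)) ^ 2 = Q powi int (2 * (m choose 2))"
      by (simp only: power_int_of_nat) (simp flip: power_mult add: mult.commute)
    ultimately show ?thesis
      unfolding exponent using \<open>Q \<noteq> 0\<close> by (simp add: power_int_add power_int_power' mult_ac)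
  qed
  show ?thesis
    unfolding little_qjacobi_coeff_def qpoch_inverse_power [OF assms(1) nonzero assms(3)]
      upper prod mult_1_right scalar [symmetric]
    using nonzero by (simp add: field_simps power2_eq_square)
qed

lemma little_qjacobi_1_1_newton_expansion:
  fixes Q x :: "'a::field"
  assumes "Q \<noteq> 0" and "\<And>n. qpoch Q Q n \<noteq> 0"
  shows "little_qjacobi l x 1 1 Q
       = (\<Sum>m\<le>l. Q powi (int m * (int m - int l + int p)) * qpoch Q Q (l + m)
            / (qpoch Q Q (l - m) * (qpoch Q Q m) ^ 2)
            * little_qjacobi (l - m) (Q ^ p) (Q ^ m) (Q ^ m) Q
            * qpoch (Q powi (1 - int p - int m) * x) Q m)"
proof -
  let ?c = "little_qjacobi_coeff l 1 1 Q"
  let ?C = "\<lambda>m. Q powi (int m * (int m - int l + int p)) * qpoch Q Q (l + m)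
            / (qpoch Q Q (l - m) * (qpoch Q Q m) ^ 2)"
  let ?jacobi = "\<lambda>m. little_qjacobi (l - m) (Q ^ p) (Q ^ m) (Q ^ m) Q"
  let ?newton = "\<lambda>m. \<Prod>i<m. x - Q ^ p * Q ^ i"
  let ?scaled_qpoch = "\<lambda>m. qpoch (Q powi (1 - int p - int m) * x) Q m"
  have "little_qjacobi l x 1 1 Q = (\<Sum>k\<le>l. ?c k * x ^ k)"
    by (rule little_qjacobi_eq_sum_coeff)
  also have "\<dots> = (\<Sum>m\<le>l. (\<Sum>j\<le>l - m. ?c (m + j) * qbinom Q (m + j) m * (Q ^ p) ^ j) * ?newton m)"
    by (rule sum_monomials_eq_sum_newton)
  also have "\<dots> = (\<Sum>m\<le>l. ?C m * ?jacobi m * ?scaled_qpoch m)"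
  proof (intro sum.cong refl)
    fix m
    assume "m \<in> {..l}"
    then have "m \<le> l"
      by simp
    have "(\<Sum>j\<le>l - m. ?c (m + j) * qbinom Q (m + j) m * (Q ^ p) ^ j) = ?c m * ?jacobi m"
      using little_qjacobi_coeff_mult_qbinom [OF assms \<open>m \<le> l\<close>]
      by (simp add: little_qjacobi_eq_sum_coeff [of "l - m"] sum_distrib_left mult_ac)
    then have "(\<Sum>j\<le>l - m. ?c (m + j) * qbinom Q (m + j) m * (Q ^ p) ^ j) * ?newton m
        = ?jacobi m * (?c m * ?newton m)"
      by (simp only: mult_ac)
    also have "\<dots> = ?jacobi m * (?C m * ?scaled_qpoch m)"
      by (simp only: little_qjacobi_coeff_mult_newton_prod [OF assms \<open>m \<le> l\<close>])
    also have "\<dots> = ?C m * ?jacobi m * ?scaled_qpoch m"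
      by (simp only: mult_ac)
    finally show "(\<Sum>j\<le>l - m. ?c (m + j) * qbinom Q (m + j) m * (Q ^ p) ^ j) * ?newton m
        = ?C m * ?jacobi m * ?scaled_qpoch m" .
  qed
  finally show ?thesis .
qed

lemma little_qjacobi_1_1_mult_qpoch_expansion:
  fixes Q x :: "'a::field"
  assumes "Q \<noteq> 0" and "\<And>n. qpoch Q Q n \<noteq> 0"
  shows "little_qjacobi l x 1 1 Q * qpoch (Q powi (1 - int p) * x) Q p
       = (\<Sum>m=0..l. Q powi (int m * (int m - int l + int p)) * qpoch Q Q (l + m)
            / (qpoch Q Q (l - m) * (qpoch Q Q m) ^ 2)
            * little_qjacobi (l - m) (Q ^ p) (Q ^ m) (Q ^ m) Q
            * qpoch (Q powi (1 - int p - int m) * x) Q (p + m))"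
proof -
  have merge: "qpoch (Q powi (1 - int p - int m) * x) Q m * qpoch (Q powi (1 - int p) * x) Q p
      = qpoch (Q powi (1 - int p - int m) * x) Q (p + m)" for m
  proof -
    have "Q powi (1 - int p - int m) * Q ^ m = Q powi (1 - int p)"
      using \<open>Q \<noteq> 0\<close> power_int_add [of Q "1 - int p - int m" "int m"] by simp
    then show ?thesis
      by (simp add: qpoch_add [of _ Q m p] add.commute mult_ac)
  qed
  show ?thesis
    unfolding little_qjacobi_1_1_newton_expansion [OF assms, of l x p] sum_distrib_right atLeast0AtMost
    by (simp only: mult.assoc merge)
qed

theorem mainTheorem5:
  fixes q :: real and p l :: nat and x :: complex
  assumes "0 < q" and "q < 1"
  shows "little_qjacobi l x 1 1 (complex_of_real q)
           * qpoch (complex_of_real q powi (1 - int p) * x) (complex_of_real q) p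
       = (\<Sum>m=0..l.
            complex_of_real q powi (int m * (int m - int l + int p))
            * qpoch (complex_of_real q) (complex_of_real q) (l + m)
            / (qpoch (complex_of_real q) (complex_of_real q) (l - m)
               * (qpoch (complex_of_real q) (complex_of_real q) m) ^ 2)
            * little_qjacobi (l - m) (complex_of_real q ^ p) (complex_of_real q ^ m)
                (complex_of_real q ^ m) (complex_of_real q)
            * qpoch (complex_of_real q powi (1 - int p - int m) * x) (complex_of_real q) (p + m))"
proof -
  have "norm (complex_of_real q) < 1"
    using assms by simp
  then show ?thesis
    using assms by (intro little_qjacobi_1_1_mult_qpoch_expansion qpoch_self_nonzero) auto
qed

end
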